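(* Let $\mathcal L$ be an arbitrary finite lattice. Then the simplicial complex $\mathcal J(\mathcal L)$ collapses onto its subcomplex $\Delta(\bar{\mathcal L})$.
   Context: For a finite lattice $\mathcal L$ with minimum $\hat0$ and maximum $\hat1$, $\bar{\mathcal L}=\mathcal L\setminus\{\hat0,\hat1\}$. $\mathcal J(\mathcal L)$ is the simplicial complex with vertex set $\bar{\mathcal L}$ whose simplices are the nonempty subsets $S\subseteq\bar{\mathcal L}$ with $\bigwedge S\neq\hat0$. $\Delta(\bar{\mathcal L})$ is the order complex of $\bar{\mathcal L}$ (simplices = nonempty chains), which is a subcomplex of $\mathcal J(\mathcal L)$. *)

theory Defs
  imports Main
begin

text \<open>Abstract simplicial complexes are represented as families of nonempty finite
vertex sets (the faces).\<close>

definition elementary_collapse :: "'v set set \<Rightarrow> 'v set set \<Rightarrow> bool" where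
  "elementary_collapse K K' \<longleftrightarrow>
     (\<exists>\<sigma> \<tau>. \<sigma> \<in> K \<and> \<tau> \<in> K \<and> \<sigma> \<subset> \<tau> \<and> card \<tau> = card \<sigma> + 1 \<and>
        (\<forall>\<rho>\<in>K. \<sigma> \<subseteq> \<rho> \<longrightarrow> \<rho> = \<sigma> \<or> \<rho> = \<tau>) \<and>
        K' = K - {\<sigma>, \<tau>})"

definition collapses :: "'v set set \<Rightarrow> 'v set set \<Rightarrow> bool" where
  "collapses K L \<longleftrightarrow> elementary_collapse\<^sup>*\<^sup>* K L"

definition proper_part :: "'a::{finite,bounded_lattice} set" where
  "proper_part = UNIV - {bot, top}"

definition J_complex :: "'a::{finite,bounded_lattice} set set" where
  "J_complex = {S. S \<noteq> {} \<and> S \<subseteq> proper_part \<and> Inf_fin S \<noteq> bot}"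

definition order_complex :: "'a::{finite,bounded_lattice} set set" where
  "order_complex = {S. S \<noteq> {} \<and> S \<subseteq> proper_part \<and> Complete_Partial_Order.chain (\<le>) S}"

end

theory Submission
  imports Defs
begin

text \<open>For a face S of J(L) that is not a chain, let its pivot p be the meet of those
  elements of S that are incomparable with some other element of S. The pivot is comparable
  with every element of S, so adding or removing it changes neither these incomparable
  elements nor the meet of S: the non-chain faces come in pairs S - {p}, insert p S with the
  same pivot. Going through the possible pivots upwards along a linear extension of L, the
  pairs with pivot p are removed by elementary collapses, larger faces first; a face containing
  one of them has a pivot at most p, and all faces with smaller pivots are already gone.
  What remains are the chains.\<close>

lemma elementary_collapse_free_pair:
  assumes "\<sigma> \<in> K" and "insert v \<sigma> \<in> K" and "v \<notin> \<sigma>" and "finite \<sigma>"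
    and "\<And>\<rho>. \<rho> \<in> K \<Longrightarrow> \<sigma> \<subseteq> \<rho> \<Longrightarrow> \<rho> = \<sigma> \<or> \<rho> = insert v \<sigma>"
  shows "elementary_collapse K (K - {\<sigma>, insert v \<sigma>})"
  unfolding elementary_collapse_def using assms by (intro exI[of _ \<sigma>] exI[of _ "insert v \<sigma>"]) auto

lemma collapses_remove_cone_pairs:
  assumes "finite A" and "\<forall>\<sigma>\<in>A. finite \<sigma> \<and> v \<notin> \<sigma>"
    and "A \<union> insert v ` A \<subseteq> K"
    and "\<And>\<sigma> \<rho>. \<sigma> \<in> A \<union> insert v ` A \<Longrightarrow> \<rho> \<in> K \<Longrightarrow> \<sigma> \<subseteq> \<rho> \<Longrightarrow> \<rho> \<in> A \<union> insert v ` A"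
  shows "collapses K (K - (A \<union> insert v ` A))"
  using assms
proof (induction A arbitrary: K rule: finite_ranking_induct[where f = card])
  case empty
  then show ?case by (simp add: collapses_def)
next
  case (insert \<sigma> A)
  show ?case
  proof (cases "\<sigma> \<in> A")
    case True
    then show ?thesis using insert.IH insert.prems by (simp add: insert_absorb)
  next
    case new: False
    let ?M = "A \<union> insert v ` A" and ?K' = "K - {\<sigma>, insert v \<sigma>}"
    have \<sigma>: "finite \<sigma>" "v \<notin> \<sigma>" using insert.prems(1) by auto
    have \<sigma>_maximal: "\<tau> = \<sigma>" if "\<tau> \<in> insert \<sigma> A" "\<sigma> \<subseteq> \<tau>" for \<tau>
      using that insert.hyps(2) insert.prems(1) by (metis card_seteq insert_iff)
    have "elementary_collapse K ?K'"
    proof (rule elementary_collapse_free_pair)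
      fix \<rho> assume "\<rho> \<in> K" "\<sigma> \<subseteq> \<rho>"
      then have "\<rho> \<in> insert \<sigma> A \<union> insert v ` insert \<sigma> A"
        using insert.prems(3) by blast
      then show "\<rho> = \<sigma> \<or> \<rho> = insert v \<sigma>"
        using \<sigma>_maximal \<open>\<sigma> \<subseteq> \<rho>\<close> \<sigma>(2) by (auto simp: subset_insert)
    qed (use insert.prems(2) \<sigma> in auto)
    moreover have "collapses ?K' (?K' - ?M)"
    proof (rule insert.IH)
      show "?M \<subseteq> ?K'"
        using insert.prems(1,2) new \<sigma>(2) by (auto simp: insert_ident)
      show "\<rho> \<in> ?M" if "\<tau> \<in> ?M" "\<rho> \<in> ?K'" "\<tau> \<subseteq> \<rho>" for \<tau> \<rho>
        using that insert.prems(3)[of \<tau> \<rho>] by auto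
    qed (use insert.prems(1) in auto)
    moreover have "?K' - ?M = K - (insert \<sigma> A \<union> insert v ` insert \<sigma> A)"
      by auto
    ultimately show ?thesis
      unfolding collapses_def by (metis converse_rtranclp_into_rtranclp)
  qed
qed

definition incomparables :: "'a::order set \<Rightarrow> 'a set" where
  "incomparables S = {s \<in> S. \<exists>t\<in>S. \<not> s \<le> t \<and> \<not> t \<le> s}"

definition pivot :: "'a::semilattice_inf set \<Rightarrow> 'a" where
  "pivot S = Inf_fin (incomparables S)"

lemma incomparables_subset: "incomparables S \<subseteq> S"
  by (auto simp: incomparables_def)

lemma incomparables_mono: "S \<subseteq> T \<Longrightarrow> incomparables S \<subseteq> incomparables T"
  by (auto simp: incomparables_def)

lemma chain_iff_incomparables_empty:
  "Complete_Partial_Order.chain (\<le>) S \<longleftrightarrow> incomparables S = {}"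
  by (auto simp: incomparables_def chain_def)

lemma incomparables_insert_comparable:
  "\<forall>s\<in>S. x \<le> s \<or> s \<le> x \<Longrightarrow> incomparables (insert x S) = incomparables S"
  by (auto simp: incomparables_def)

lemma pivot_le:
  fixes S :: "'a::{finite,semilattice_inf} set"
  shows "s \<in> incomparables S \<Longrightarrow> pivot S \<le> s"
  unfolding pivot_def by (rule Inf_fin.coboundedI) simp_all

lemma pivot_antimono:
  fixes S :: "'a::{finite,semilattice_inf} set"
  shows "S \<subseteq> T \<Longrightarrow> incomparables S \<noteq> {} \<Longrightarrow> pivot T \<le> pivot S"
  unfolding pivot_def by (rule Inf_fin.subset_imp) (auto dest: incomparables_mono)

lemma pivot_comparable:
  fixes S :: "'a::{finite,semilattice_inf} set"
  assumes "incomparables S \<noteq> {}" and "s \<in> S"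
  shows "pivot S \<le> s \<or> s \<le> pivot S"
proof (cases "\<exists>n\<in>incomparables S. n \<le> s")
  case True
  then show ?thesis using pivot_le order_trans by blast
next
  case False
  with assms(2) have "s \<notin> incomparables S" by blast
  with assms(2) have "\<forall>n\<in>incomparables S. s \<le> n"
    using False incomparables_subset by (fastforce simp: incomparables_def)
  then have "s \<le> pivot S"
    unfolding pivot_def using assms(1) by (intro Inf_fin.boundedI) simp_all
  then show ?thesis ..
qed

lemma pivot_notin_incomparables:
  fixes S :: "'a::{finite,semilattice_inf} set"
  assumes "incomparables S \<noteq> {}"
  shows "pivot S \<notin> incomparables S"
  using pivot_comparable[OF assms] by (auto simp: incomparables_def)

lemma
  fixes S :: "'a::{finite,semilattice_inf} set"
  assumes "incomparables S \<noteq> {}"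
  shows incomparables_insert_pivot: "incomparables (insert (pivot S) S) = incomparables S"
    and incomparables_remove_pivot: "incomparables (S - {pivot S}) = incomparables S"
proof -
  have "\<forall>s\<in>S - {pivot S}. pivot S \<le> s \<or> s \<le> pivot S"
    using pivot_comparable[OF assms] by blast
  then have insert_remove:
      "incomparables (insert (pivot S) (S - {pivot S})) = incomparables (S - {pivot S})"
    by (rule incomparables_insert_comparable)
  show remove: "incomparables (S - {pivot S}) = incomparables S"
  proof (cases "pivot S \<in> S")
    case True
    then show ?thesis using insert_remove by (simp add: insert_absorb)
  qed simp
  show "incomparables (insert (pivot S) S) = incomparables S"
    using insert_remove remove by simp
qed

lemma
  fixes S :: "'a::{finite,semilattice_inf} set"
  assumes "incomparables S \<noteq> {}"
  shows pivot_insert_pivot: "pivot (insert (pivot S) S) = pivot S"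
    and pivot_remove_pivot: "pivot (S - {pivot S}) = pivot S"
  using incomparables_insert_pivot[OF assms] incomparables_remove_pivot[OF assms]
  by (simp_all add: pivot_def)

lemma Inf_fin_le_pivot:
  fixes S :: "'a::{finite,semilattice_inf} set"
  shows "incomparables S \<noteq> {} \<Longrightarrow> Inf_fin S \<le> pivot S"
  unfolding pivot_def by (rule Inf_fin.subset_imp) (simp_all add: incomparables_subset)

lemma Inf_fin_insert_pivot:
  fixes S :: "'a::{finite,semilattice_inf} set"
  assumes "incomparables S \<noteq> {}"
  shows "Inf_fin (insert (pivot S) S) = Inf_fin S"
proof -
  have "S \<noteq> {}" using assms incomparables_subset by blast
  then show ?thesis using Inf_fin_le_pivot[OF assms] by (simp add: inf_absorb2)
qed

lemma Inf_fin_remove_pivot: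
  fixes S :: "'a::{finite,semilattice_inf} set"
  assumes "incomparables S \<noteq> {}"
  shows "Inf_fin (S - {pivot S}) = Inf_fin S"
proof (cases "pivot S \<in> S")
  case True
  have "incomparables S \<subseteq> S - {pivot S}"
    using incomparables_subset pivot_notin_incomparables[OF assms] by blast
  then have "S - {pivot S} \<noteq> {}" and "Inf_fin (S - {pivot S}) \<le> pivot S"
    using assms unfolding pivot_def by (auto intro: Inf_fin.subset_imp)
  then show ?thesis
    using True by (metis Inf_fin.insert finite inf_absorb2 insert_Diff)
qed simp

lemma Inf_fin_chain_mem:
  fixes S :: "'a::semilattice_inf set"
  shows "finite S \<Longrightarrow> S \<noteq> {} \<Longrightarrow> Complete_Partial_Order.chain (\<le>) S \<Longrightarrow> Inf_fin S \<in> S"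
proof (induction S rule: finite_ne_induct)
  case (insert x F)
  then have "Inf_fin F \<in> F" by (auto intro: chain_subset)
  moreover from this have "x \<le> Inf_fin F \<or> Inf_fin F \<le> x"
    using insert.prems by (auto dest: chainD)
  ultimately show ?case
    using insert.hyps by (auto simp: inf_absorb1 inf_absorb2)
qed simp

lemma pivot_in_proper_part:
  fixes S :: "'a::{finite,bounded_lattice} set"
  assumes "S \<in> J_complex" and "incomparables S \<noteq> {}"
  shows "pivot S \<in> proper_part"
proof -
  have "pivot S \<noteq> bot"
    using assms Inf_fin_le_pivot[OF assms(2)] by (auto simp: J_complex_def bot_unique)
  moreover obtain s where "s \<in> incomparables S" using assms(2) by blast
  then have "pivot S \<le> s" and "s \<noteq> top"
    using assms(1) pivot_le incomparables_subset[of S]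
    by (auto simp: J_complex_def proper_part_def)
  then have "pivot S \<noteq> top" by (auto simp: top_unique)
  ultimately show ?thesis by (simp add: proper_part_def)
qed

lemma
  fixes S :: "'a::{finite,bounded_lattice} set"
  assumes "S \<in> J_complex" and "incomparables S \<noteq> {}"
  shows insert_pivot_in_J_complex: "insert (pivot S) S \<in> J_complex"
    and remove_pivot_in_J_complex: "S - {pivot S} \<in> J_complex"
proof -
  have "incomparables S \<subseteq> S - {pivot S}"
    using incomparables_subset pivot_notin_incomparables[OF assms(2)] by blast
  then show "S - {pivot S} \<in> J_complex"
    using assms Inf_fin_remove_pivot[OF assms(2)] by (auto simp: J_complex_def)
  show "insert (pivot S) S \<in> J_complex"
    using assms Inf_fin_insert_pivot[OF assms(2)] pivot_in_proper_part[OF assms]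
    by (auto simp: J_complex_def)
qed

definition pivot_faces :: "'a::{finite,bounded_lattice} \<Rightarrow> 'a set set" where
  "pivot_faces x = {S \<in> J_complex. incomparables S \<noteq> {} \<and> pivot S = x}"

definition J_pivots_outside :: "'a::{finite,bounded_lattice} set \<Rightarrow> 'a set set" where
  "J_pivots_outside X = {S \<in> J_complex. incomparables S = {} \<or> pivot S \<notin> X}"

lemma pivot_faces_cone_pairs:
  "pivot_faces x = {S \<in> pivot_faces x. x \<notin> S} \<union> insert x ` {S \<in> pivot_faces x. x \<notin> S}"
    (is "_ = ?A \<union> insert x ` ?A")
proof (intro equalityI subsetI)
  fix S assume S: "S \<in> pivot_faces x"
  then have J: "S \<in> J_complex" and ne: "incomparables S \<noteq> {}" and x: "pivot S = x"
    by (auto simp: pivot_faces_def)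
  show "S \<in> ?A \<union> insert x ` ?A"
  proof (cases "x \<in> S")
    case True
    have "S - {x} \<in> ?A"
      using remove_pivot_in_J_complex[OF J ne] incomparables_remove_pivot[OF ne]
        pivot_remove_pivot[OF ne] ne x by (simp add: pivot_faces_def)
    moreover have "S = insert x (S - {x})" using True by blast
    ultimately show ?thesis by blast
  qed (use S in blast)
next
  fix S assume "S \<in> ?A \<union> insert x ` ?A"
  then show "S \<in> pivot_faces x"
    using insert_pivot_in_J_complex incomparables_insert_pivot pivot_insert_pivot
    by (fastforce simp: pivot_faces_def)
qed

lemma J_pivots_outside_empty: "J_pivots_outside {} = J_complex"
  by (auto simp: J_pivots_outside_def)

lemma J_pivots_outside_UNIV: "J_pivots_outside UNIV = order_complex"
proof -
  have "Inf_fin S \<noteq> bot" if "S \<noteq> {}" "S \<subseteq> proper_part" "Complete_Partial_Order.chain (\<le>) S"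
    for S :: "'a set"
    using Inf_fin_chain_mem[OF finite that(1,3)] that(2) by (auto simp: proper_part_def)
  then show ?thesis
    by (auto simp: J_pivots_outside_def J_complex_def order_complex_def
        chain_iff_incomparables_empty)
qed

lemma collapses_J_pivots_outside_step:
  fixes X :: "'a::{finite,bounded_lattice} set"
  assumes down: "\<forall>y\<in>X. \<forall>z\<le>y. z \<in> X" and "x \<in> X"
  shows "collapses (J_pivots_outside (X - {x})) (J_pivots_outside X)"
proof -
  let ?K = "J_pivots_outside (X - {x})"
  define A where "A = {S \<in> pivot_faces x. x \<notin> S}"
  have pairs: "A \<union> insert x ` A = pivot_faces x"
    unfolding A_def by (rule pivot_faces_cone_pairs[symmetric])
  have "collapses ?K (?K - pivot_faces x)"
  proof (rule collapses_remove_cone_pairs[of A x, unfolded pairs])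
    show "pivot_faces x \<subseteq> ?K"
      by (auto simp: J_pivots_outside_def pivot_faces_def)
    show "\<rho> \<in> pivot_faces x" if "\<sigma> \<in> pivot_faces x" "\<rho> \<in> ?K" "\<sigma> \<subseteq> \<rho>" for \<sigma> \<rho>
    proof -
      have "incomparables \<rho> \<noteq> {}" and "pivot \<rho> \<le> x"
        using that(1,3) incomparables_mono[OF that(3)] pivot_antimono[OF that(3)]
        by (auto simp: pivot_faces_def)
      moreover from this have "pivot \<rho> = x"
        using that(2) down \<open>x \<in> X\<close> by (auto simp: J_pivots_outside_def)
      ultimately show ?thesis
        using that(2) by (auto simp: J_pivots_outside_def pivot_faces_def)
    qed
    show "finite A" by simp
    show "\<forall>\<sigma>\<in>A. finite \<sigma> \<and> x \<notin> \<sigma>" by (simp add: A_def)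
  qed
  moreover have "?K - pivot_faces x = J_pivots_outside X"
    using \<open>x \<in> X\<close> by (auto simp: J_pivots_outside_def pivot_faces_def)
  ultimately show ?thesis by simp
qed

lemma collapses_J_pivots_outside:
  fixes X :: "'a::{finite,bounded_lattice} set"
  shows "\<forall>y\<in>X. \<forall>z\<le>y. z \<in> X \<Longrightarrow> collapses J_complex (J_pivots_outside X)"
  using finite[of X]
proof (induction X rule: finite_psubset_induct)
  case (psubset X)
  show ?case
  proof (cases "X = {}")
    case True
    then show ?thesis by (simp add: J_pivots_outside_empty collapses_def)
  next
    case False
    then obtain x where "x \<in> X" and x_maximal: "\<forall>y\<in>X. x \<le> y \<longrightarrow> x = y"
      using finite_has_maximal[of X] by auto
    have "\<forall>y\<in>X - {x}. \<forall>z\<le>y. z \<in> X - {x}"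
      using psubset.prems x_maximal by (metis Diff_iff order_trans singletonD)
    then have "collapses J_complex (J_pivots_outside (X - {x}))"
      using psubset.IH \<open>x \<in> X\<close> by blast
    moreover have "collapses (J_pivots_outside (X - {x})) (J_pivots_outside X)"
      using collapses_J_pivots_outside_step[OF psubset.prems \<open>x \<in> X\<close>] .
    ultimately show ?thesis unfolding collapses_def by (rule rtranclp_trans)
  qed
qed

theorem mainTheorem6:
  shows "collapses (J_complex :: 'a::{finite,bounded_lattice} set set) order_complex"
  using collapses_J_pivots_outside[of UNIV] by (simp add: J_pivots_outside_UNIV)

end
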